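(* There is a deterministic, non-contractive, strict online embedding of points arriving one by one from any metric space into HSTs such that, for every $n$, after $n$ points have arrived every pair $u,v$ of them satisfies $d_T(u,v)\le 2^n d(u,v)$; i.e., it has distortion $2^n$ on $n$ points, and it requires no prior knowledge of $n$.
   Context: For $\mu\ge1$, a $\mu$-HST is the metric on the leaves of a rooted tree with node weights $\varphi\ge0$ ($\varphi(v)=0$ iff $v$ is a leaf, $\varphi(v)\le\varphi(u)/\mu$ when $v$ is a child of $u$), with leaf distance $d_T(u,v)=\varphi(\mathrm{lca}(u,v))$; "HSTs" is the family of such metrics. A strict online embedding receives points of $(X,d)$ one at a time and upon arrival of each point (depending only on points so far) outputs an HST metric $d_T$ on all points arrived so far, such that distances between previously arrived points never change. Non-contractive means $d_T(u,v)\ge d(u,v)$ for all arrived $u,v$. *)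

theory Defs
  imports "HOL-Analysis.Analysis"
begin

definition rooted_tree :: "nat set \<Rightarrow> nat \<Rightarrow> (nat \<Rightarrow> nat) \<Rightarrow> bool" where
  "rooted_tree V r p \<longleftrightarrow> finite V \<and> r \<in> V \<and> p r = r \<and>
     (\<forall>v\<in>V. v \<noteq> r \<longrightarrow> p v \<in> V) \<and> (\<forall>v\<in>V. \<exists>k. (p ^^ k) v = r)"

definition ancestors :: "(nat \<Rightarrow> nat) \<Rightarrow> nat \<Rightarrow> nat set" where
  "ancestors p v = {(p ^^ k) v | k. True}"

definition is_leaf :: "nat set \<Rightarrow> nat \<Rightarrow> (nat \<Rightarrow> nat) \<Rightarrow> nat \<Rightarrow> bool" where
  "is_leaf V r p v \<longleftrightarrow> v \<in> V \<and> \<not> (\<exists>c\<in>V. c \<noteq> r \<and> p c = v)"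

definition is_lca :: "(nat \<Rightarrow> nat) \<Rightarrow> nat \<Rightarrow> nat \<Rightarrow> nat \<Rightarrow> bool" where
  "is_lca p a b w \<longleftrightarrow> w \<in> ancestors p a \<inter> ancestors p b \<and>
     (\<forall>w' \<in> ancestors p a \<inter> ancestors p b. w' \<in> ancestors p w)"

definition hst_metric :: "real \<Rightarrow> 'a set \<Rightarrow> ('a \<Rightarrow> 'a \<Rightarrow> real) \<Rightarrow> bool" where
  "hst_metric \<mu> S D \<longleftrightarrow> (\<exists>V r p (leaf :: 'a \<Rightarrow> nat) (\<phi> :: nat \<Rightarrow> real).
     rooted_tree V r p \<and>
     bij_betw leaf S {v. is_leaf V r p v} \<and>
     (\<forall>v\<in>V. \<phi> v \<ge> 0 \<and> (\<phi> v = 0 \<longleftrightarrow> is_leaf V r p v)) \<and>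
     (\<forall>v\<in>V. v \<noteq> r \<longrightarrow> \<phi> v \<le> \<phi> (p v) / \<mu>) \<and>
     (\<forall>x\<in>S. \<forall>y\<in>S. \<exists>w. is_lca p (leaf x) (leaf y) w \<and> D x y = \<phi> w))"

definition is_HST_metric :: "'a set \<Rightarrow> ('a \<Rightarrow> 'a \<Rightarrow> real) \<Rightarrow> bool" where
  "is_HST_metric S D \<longleftrightarrow> (\<exists>\<mu>\<ge>1. hst_metric \<mu> S D)"

end

theory Submission
  imports Defs
begin

(*
  A finite ultrametric is a 1-HST: its closed balls, ordered by inclusion, form a tree whose
  leaves are the singletons, and the ball of radius d(x,y) around x is the lowest common
  ancestor of x and y and has diameter d(x,y).

  So it suffices to maintain an ultrametric D on the points seen so far. When the n-th point x
  arrives, let y be its nearest predecessor and put D(x,v) = max(2^n d(x,y), D(y,v)): x joins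
  the cluster of y at level 2^n d(x,y), and no old distance changes. As d(y,v) <= 2 d(x,v),
  this keeps D <= 2^n d. Non-contraction is carried through the induction in the stronger
  form d <= (1 - 2^-n) D, whose slack absorbs the term d(x,y) <= D(x,v) / 2^n of the triangle
  inequality d(x,v) <= d(x,y) + d(y,v).
*)

(* The tree notions of Defs over an arbitrary node type (at nat they are the originals), so
   that a tree can be built with sets as nodes and relabelled by naturals afterwards. *)
definition gen_rooted_tree :: "'b set \<Rightarrow> 'b \<Rightarrow> ('b \<Rightarrow> 'b) \<Rightarrow> bool" where
  "gen_rooted_tree V r p \<longleftrightarrow> finite V \<and> r \<in> V \<and> p r = r \<and>
     (\<forall>v\<in>V. v \<noteq> r \<longrightarrow> p v \<in> V) \<and> (\<forall>v\<in>V. \<exists>k. (p ^^ k) v = r)"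

definition gen_ancestors :: "('b \<Rightarrow> 'b) \<Rightarrow> 'b \<Rightarrow> 'b set" where
  "gen_ancestors p v = {(p ^^ k) v | k. True}"

definition gen_is_leaf :: "'b set \<Rightarrow> 'b \<Rightarrow> ('b \<Rightarrow> 'b) \<Rightarrow> 'b \<Rightarrow> bool" where
  "gen_is_leaf V r p v \<longleftrightarrow> v \<in> V \<and> \<not> (\<exists>c\<in>V. c \<noteq> r \<and> p c = v)"

definition gen_is_lca :: "('b \<Rightarrow> 'b) \<Rightarrow> 'b \<Rightarrow> 'b \<Rightarrow> 'b \<Rightarrow> bool" where
  "gen_is_lca p a b w \<longleftrightarrow> w \<in> gen_ancestors p a \<inter> gen_ancestors p b \<and>
     (\<forall>w' \<in> gen_ancestors p a \<inter> gen_ancestors p b. w' \<in> gen_ancestors p w)"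

definition hst_tree ::
    "real \<Rightarrow> 'a set \<Rightarrow> ('a \<Rightarrow> 'a \<Rightarrow> real) \<Rightarrow> 'b set \<Rightarrow> 'b \<Rightarrow> ('b \<Rightarrow> 'b) \<Rightarrow> ('a \<Rightarrow> 'b) \<Rightarrow> ('b \<Rightarrow> real) \<Rightarrow> bool"
  where
  "hst_tree \<mu> S D V r p leaf \<phi> \<longleftrightarrow>
     gen_rooted_tree V r p \<and>
     bij_betw leaf S {v. gen_is_leaf V r p v} \<and>
     (\<forall>v\<in>V. \<phi> v \<ge> 0 \<and> (\<phi> v = 0 \<longleftrightarrow> gen_is_leaf V r p v)) \<and>
     (\<forall>v\<in>V. v \<noteq> r \<longrightarrow> \<phi> v \<le> \<phi> (p v) / \<mu>) \<and>
     (\<forall>x\<in>S. \<forall>y\<in>S. \<exists>w. gen_is_lca p (leaf x) (leaf y) w \<and> D x y = \<phi> w)"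

lemma hst_metric_iff_hst_tree:
  "hst_metric \<mu> S D \<longleftrightarrow> (\<exists>V r p (leaf :: 'a \<Rightarrow> nat) \<phi>. hst_tree \<mu> S D V r p leaf \<phi>)"
  unfolding hst_metric_def hst_tree_def rooted_tree_def gen_rooted_tree_def is_leaf_def
    gen_is_leaf_def is_lca_def gen_is_lca_def ancestors_def gen_ancestors_def ..

lemma gen_rooted_tree_funpow_closed:
  assumes "gen_rooted_tree V r p" "v \<in> V"
  shows "(p ^^ k) v \<in> V"
proof (induction k)
  case (Suc k)
  then show ?case
    using assms unfolding gen_rooted_tree_def by (cases "(p ^^ k) v = r") auto
qed (use assms in simp)

lemma gen_ancestors_subset:
  "gen_rooted_tree V r p \<Longrightarrow> v \<in> V \<Longrightarrow> gen_ancestors p v \<subseteq> V"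
  using gen_rooted_tree_funpow_closed by (fastforce simp: gen_ancestors_def)

locale tree_relabelling =
  fixes V :: "'b set" and r :: 'b and p :: "'b \<Rightarrow> 'b" and h :: "'b \<Rightarrow> 'c"
  assumes tree: "gen_rooted_tree V r p" and inj: "inj_on h V"
begin

definition relabel :: "'c \<Rightarrow> 'b" where "relabel = the_inv_into V h"

definition parent :: "'c \<Rightarrow> 'c" where "parent = h \<circ> p \<circ> relabel"

lemma relabel_h [simp]: "v \<in> V \<Longrightarrow> relabel (h v) = v"
  unfolding relabel_def using inj by (rule the_inv_into_f_f)

lemma p_closed: "v \<in> V \<Longrightarrow> p v \<in> V"
  using gen_rooted_tree_funpow_closed[OF tree, of v 1] by simp

lemma funpow_parent: "v \<in> V \<Longrightarrow> (parent ^^ k) (h v) = h ((p ^^ k) v)"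
  by (induction k) (simp_all add: parent_def gen_rooted_tree_funpow_closed[OF tree])

lemma ancestors_parent: "v \<in> V \<Longrightarrow> gen_ancestors parent (h v) = h ` gen_ancestors p v"
  by (auto simp: gen_ancestors_def funpow_parent)

lemma rooted_tree_parent: "gen_rooted_tree (h ` V) (h r) parent"
proof -
  have r: "r \<in> V" "p r = r" and reach: "\<forall>v\<in>V. \<exists>k. (p ^^ k) v = r"
    using tree by (auto simp: gen_rooted_tree_def)
  have "\<exists>k. (parent ^^ k) (h v) = h r" if "v \<in> V" for v
    using reach that by (metis funpow_parent)
  then show ?thesis
    using tree r by (auto simp: gen_rooted_tree_def parent_def p_closed)
qed

lemma is_leaf_parent_iff:
  assumes "v \<in> V"
  shows "gen_is_leaf (h ` V) (h r) parent (h v) \<longleftrightarrow> gen_is_leaf V r p v"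
proof -
  have "r \<in> V" using tree by (simp add: gen_rooted_tree_def)
  then have "(\<exists>c\<in>V. h c \<noteq> h r \<and> h (p c) = h v) \<longleftrightarrow> (\<exists>c\<in>V. c \<noteq> r \<and> p c = v)"
    using assms inj p_closed by (metis inj_on_eq_iff)
  then show ?thesis
    using assms by (simp add: gen_is_leaf_def parent_def)
qed

lemma leaves_parent: "{v. gen_is_leaf (h ` V) (h r) parent v} = h ` {v. gen_is_leaf V r p v}"
proof (intro set_eqI iffI)
  fix v' assume "v' \<in> {v. gen_is_leaf (h ` V) (h r) parent v}"
  moreover from this obtain v where "v \<in> V" "v' = h v"
    by (auto simp: gen_is_leaf_def)
  ultimately show "v' \<in> h ` {v. gen_is_leaf V r p v}"
    using is_leaf_parent_iff by auto
qed (use is_leaf_parent_iff in \<open>auto simp: gen_is_leaf_def\<close>)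

lemma bij_betw_leaves_parent:
  assumes "bij_betw leaf S {v. gen_is_leaf V r p v}"
  shows "bij_betw (h \<circ> leaf) S {v. gen_is_leaf (h ` V) (h r) parent v}"
proof -
  have "bij_betw h {v. gen_is_leaf V r p v} (h ` {v. gen_is_leaf V r p v})"
    using inj_on_subset[OF inj] by (auto simp: bij_betw_def gen_is_leaf_def)
  then show ?thesis
    unfolding leaves_parent by (rule bij_betw_trans[OF assms])
qed

lemma is_lca_parent_iff:
  assumes "a \<in> V" "b \<in> V" "w \<in> V"
  shows "gen_is_lca parent (h a) (h b) (h w) \<longleftrightarrow> gen_is_lca p a b w"
proof -
  define I where "I = gen_ancestors p a \<inter> gen_ancestors p b"
  have sub: "I \<subseteq> V" "gen_ancestors p w \<subseteq> V"
    using assms gen_ancestors_subset[OF tree] by (auto simp: I_def)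
  have "gen_ancestors parent (h a) \<inter> gen_ancestors parent (h b) = h ` I"
    using assms gen_ancestors_subset[OF tree]
    by (simp add: I_def ancestors_parent inj_on_image_Int[OF inj])
  moreover have "h u \<in> h ` A \<longleftrightarrow> u \<in> A" if "u \<in> V" "A \<subseteq> V" for u A
    using inj that by (simp add: inj_on_image_mem_iff)
  ultimately show ?thesis
    using assms sub unfolding gen_is_lca_def I_def[symmetric] ancestors_parent[OF assms(3)]
    by (auto simp: subset_iff)
qed

lemma hst_tree_relabel:
  assumes "hst_tree \<mu> S D V r p leaf \<phi>"
  shows "hst_tree \<mu> S D (h ` V) (h r) parent (h \<circ> leaf) (\<phi> \<circ> relabel)"
proof -
  have leaves: "bij_betw leaf S {v. gen_is_leaf V r p v}"
    and phi: "\<forall>v\<in>V. \<phi> v \<ge> 0 \<and> (\<phi> v = 0 \<longleftrightarrow> gen_is_leaf V r p v)"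
    and phi_parent: "\<forall>v\<in>V. v \<noteq> r \<longrightarrow> \<phi> v \<le> \<phi> (p v) / \<mu>"
    and lca: "\<forall>x\<in>S. \<forall>y\<in>S. \<exists>w. gen_is_lca p (leaf x) (leaf y) w \<and> D x y = \<phi> w"
    using assms by (auto simp: hst_tree_def)
  have leaf_V: "x \<in> S \<Longrightarrow> leaf x \<in> V" for x
    using leaves by (auto simp: bij_betw_def gen_is_leaf_def)
  have "bij_betw (h \<circ> leaf) S {v. gen_is_leaf (h ` V) (h r) parent v}"
    using leaves by (rule bij_betw_leaves_parent)
  moreover have "\<exists>w. gen_is_lca parent (h (leaf x)) (h (leaf y)) w \<and> D x y = \<phi> (relabel w)"
    if xy: "x \<in> S" "y \<in> S" for x y
  proof -
    obtain w where w: "gen_is_lca p (leaf x) (leaf y) w" "D x y = \<phi> w"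
      using lca xy by blast
    moreover have "w \<in> V"
      using w(1) gen_ancestors_subset[OF tree leaf_V[OF xy(1)]]
      by (auto simp: gen_is_lca_def)
    ultimately have "gen_is_lca parent (h (leaf x)) (h (leaf y)) (h w) \<and> D x y = \<phi> (relabel (h w))"
      using xy leaf_V is_lca_parent_iff by simp
    then show ?thesis ..
  qed
  moreover have "\<forall>v\<in>h ` V. (\<phi> \<circ> relabel) v \<ge> 0 \<and>
      ((\<phi> \<circ> relabel) v = 0 \<longleftrightarrow> gen_is_leaf (h ` V) (h r) parent v)"
    using phi is_leaf_parent_iff by auto
  moreover have "\<forall>v\<in>h ` V. v \<noteq> h r \<longrightarrow> (\<phi> \<circ> relabel) v \<le> (\<phi> \<circ> relabel) (parent v) / \<mu>"
    using phi_parent by (auto simp: parent_def p_closed)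
  ultimately show ?thesis
    using rooted_tree_parent by (auto simp: hst_tree_def)
qed

end

lemma hst_metric_if_hst_tree:
  assumes "hst_tree \<mu> S D V r p leaf \<phi>"
  shows "hst_metric \<mu> S D"
proof -
  have "finite V"
    using assms by (simp add: hst_tree_def gen_rooted_tree_def)
  then obtain h :: "'b \<Rightarrow> nat" where "inj_on h V"
    using finite_imp_inj_to_nat_seg by blast
  then interpret tree_relabelling V r p h
    using assms by unfold_locales (simp add: hst_tree_def)
  show ?thesis
    using hst_tree_relabel[OF assms] hst_metric_iff_hst_tree by blast
qed

locale Ultrametric_space = Metric_space +
  assumes ultra: "\<lbrakk>x \<in> M; y \<in> M; z \<in> M\<rbrakk> \<Longrightarrow> d x z \<le> max (d x y) (d y z)"

lemma Ultrametric_spaceI: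
  assumes "\<And>x y. 0 \<le> d x y" "\<And>x y. d x y = d y x"
    and "\<And>x y. \<lbrakk>x \<in> M; y \<in> M\<rbrakk> \<Longrightarrow> d x y = 0 \<longleftrightarrow> x = y"
    and "\<And>x y z. \<lbrakk>x \<in> M; y \<in> M; z \<in> M\<rbrakk> \<Longrightarrow> d x z \<le> max (d x y) (d y z)"
  shows "Ultrametric_space M d"
proof -
  have "Metric_space M d"
  proof
    fix x y z assume "x \<in> M" "y \<in> M" "z \<in> M"
    then show "d x z \<le> d x y + d y z"
      using assms(1)[of x y] assms(1)[of y z] assms(4)[of x y z] by linarith
  qed (use assms in auto)
  then show ?thesis
    using assms(4) by (simp add: Ultrametric_space_def Ultrametric_space_axioms_def)
qed

context Ultrametric_space
begin

lemma mcball_recentre: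
  assumes "y \<in> mcball x r"
  shows "mcball y r = mcball x r"
proof -
  have xy: "x \<in> M" "y \<in> M" "d x y \<le> r"
    using assms by auto
  have "d y z \<le> r \<longleftrightarrow> d x z \<le> r" if "z \<in> M" for z
    using ultra[OF xy(2,1) that] ultra[OF xy(1,2) that] commute[of x y] xy(3) by auto
  then show ?thesis
    using xy by auto
qed

lemma mcball_nested:
  assumes "mcball x r \<inter> mcball y s \<noteq> {}"
  shows "mcball x r \<subseteq> mcball y s \<or> mcball y s \<subseteq> mcball x r"
proof -
  obtain z where "z \<in> mcball x r" "z \<in> mcball y s"
    using assms by blast
  then have "mcball x r = mcball z r" "mcball y s = mcball z s"
    using mcball_recentre by auto
  then show ?thesis
    by (metis mcball_subset_concentric nle_le)
qed

end

locale Finite_ultrametric_space = Ultrametric_space +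
  assumes finite_M: "finite M" and M_nonempty: "M \<noteq> {}"
begin

(* Only radii that are distances from the centre, so that there are finitely many balls. *)
definition balls :: "'a set set" where
  "balls = {mcball c (d c z) | c z. c \<in> M \<and> z \<in> M}"

(* The balls strictly containing a ball form a chain, whose least element is the parent;
   intersecting with M makes M its own parent. *)
definition parent_ball :: "'a set \<Rightarrow> 'a set" where
  "parent_ball B = M \<inter> \<Inter>{C \<in> balls. B \<subset> C}"

definition max_dist :: "'a set \<Rightarrow> real" where
  "max_dist B = Max (case_prod d ` (B \<times> B))"

lemma finite_balls: "finite balls"
proof -
  have "balls = (\<lambda>(c, z). mcball c (d c z)) ` (M \<times> M)"
    by (auto simp: balls_def)
  then show ?thesis
    using finite_M by simp
qed

lemma balls_subset: "B \<in> balls \<Longrightarrow> B \<subseteq> M"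
  by (auto simp: balls_def)

lemma balls_nonempty: "B \<in> balls \<Longrightarrow> B \<noteq> {}"
  by (auto simp: balls_def)

lemma singleton_in_balls: "x \<in> M \<Longrightarrow> {x} \<in> balls"
proof -
  assume x: "x \<in> M"
  have "y \<in> mcball x (d x x) \<longleftrightarrow> y = x" for y
    using x by (auto simp del: zero) (metis nonneg order.antisym zero)
  then have "mcball x (d x x) = {x}"
    by blast
  then show ?thesis
    using x unfolding balls_def by blast
qed

lemma M_in_balls: "M \<in> balls"
proof -
  obtain c where c: "c \<in> M"
    using M_nonempty by blast
  have "Max (d c ` M) \<in> d c ` M"
    using finite_M M_nonempty by simp
  then obtain z where z: "z \<in> M" "d c z = Max (d c ` M)"
    by auto
  then have "mcball c (d c z) = M"
    using c finite_M by auto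
  then show ?thesis
    using c z unfolding balls_def by blast
qed

lemma balls_nested: "B \<in> balls \<Longrightarrow> C \<in> balls \<Longrightarrow> B \<inter> C \<noteq> {} \<Longrightarrow> B \<subseteq> C \<or> C \<subseteq> B"
  unfolding balls_def using mcball_nested by blast

lemma parent_ball_M: "parent_ball M = M"
  using balls_subset by (auto simp: parent_ball_def)

lemma parent_ball_least:
  assumes "B \<in> balls" "B \<noteq> M"
  shows "parent_ball B \<in> balls" "B \<subset> parent_ball B"
    and "\<And>C. C \<in> balls \<Longrightarrow> B \<subset> C \<Longrightarrow> parent_ball B \<subseteq> C"
proof -
  let ?U = "{C \<in> balls. B \<subset> C}"
  have "M \<in> ?U"
    using assms M_in_balls balls_subset by blast
  moreover have "subset.chain balls ?U"
    unfolding subset_chain_def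
  proof (intro conjI ballI)
    fix X Y assume "X \<in> ?U" "Y \<in> ?U"
    then show "X \<subseteq> Y \<or> Y \<subseteq> X"
      using balls_nested balls_nonempty[OF assms(1)] by blast
  qed auto
  ultimately have "\<Inter>?U \<in> ?U"
    using finite_balls by (intro Inter_in_chain) auto
  moreover have "parent_ball B = \<Inter>?U"
    using \<open>M \<in> ?U\<close> by (auto simp: parent_ball_def)
  ultimately show "parent_ball B \<in> balls" "B \<subset> parent_ball B"
    and "\<And>C. C \<in> balls \<Longrightarrow> B \<subset> C \<Longrightarrow> parent_ball B \<subseteq> C"
    by auto
qed

lemma parent_ball_in_balls: "B \<in> balls \<Longrightarrow> parent_ball B \<in> balls"
  using parent_ball_least(1) parent_ball_M by (cases "B = M") auto

lemma subset_parent_ball: "B \<in> balls \<Longrightarrow> B \<subseteq> parent_ball B"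
  using parent_ball_least(2) parent_ball_M by (cases "B = M") auto

lemma funpow_parent_ball:
  "B \<in> balls \<Longrightarrow> (parent_ball ^^ k) B \<in> balls \<and> B \<subseteq> (parent_ball ^^ k) B"
  by (induction k) (auto intro: parent_ball_in_balls dest: subset_parent_ball)

lemma parent_ball_reaches:
  "B \<in> balls \<Longrightarrow> C \<in> balls \<Longrightarrow> B \<subseteq> C \<Longrightarrow> \<exists>k. (parent_ball ^^ k) B = C"
proof (induction "card (M - B)" arbitrary: B rule: less_induct)
  case less
  show ?case
  proof (cases "B = C")
    case True
    then show ?thesis
      by (metis funpow_0)
  next
    case False
    then have "B \<noteq> M"
      using less.prems balls_subset by blast
    then have parent: "parent_ball B \<in> balls" "B \<subset> parent_ball B" "parent_ball B \<subseteq> C"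
      using parent_ball_least less.prems False by auto
    then have "card (M - parent_ball B) < card (M - B)"
      using balls_subset[OF parent(1)] finite_M by (intro psubset_card_mono) auto
    then obtain k where "(parent_ball ^^ k) (parent_ball B) = C"
      using less.hyps parent less.prems(2) by blast
    then show ?thesis
      by (metis funpow_Suc_right o_apply)
  qed
qed

lemma ancestors_parent_ball:
  "B \<in> balls \<Longrightarrow> gen_ancestors parent_ball B = {C \<in> balls. B \<subseteq> C}"
  unfolding gen_ancestors_def using funpow_parent_ball parent_ball_reaches by blast

lemma ball_tree: "gen_rooted_tree balls M parent_ball"
  unfolding gen_rooted_tree_def
  using finite_balls M_in_balls parent_ball_M parent_ball_in_balls parent_ball_reaches balls_subset
  by blast

lemma ball_tree_is_leaf_iff: "gen_is_leaf balls M parent_ball B \<longleftrightarrow> (\<exists>x\<in>M. B = {x})"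
proof
  assume leaf: "gen_is_leaf balls M parent_ball B"
  then have B: "B \<in> balls"
    by (simp add: gen_is_leaf_def)
  then obtain x where x: "x \<in> B" "x \<in> M"
    using balls_nonempty balls_subset by blast
  show "\<exists>x\<in>M. B = {x}"
  proof (rule ccontr)
    assume "\<not> (\<exists>x\<in>M. B = {x})"
    then have "B \<noteq> {x}"
      using x by blast
    obtain k where k: "(parent_ball ^^ k) {x} = B" and least: "\<forall>i<k. (parent_ball ^^ i) {x} \<noteq> B"
      using parent_ball_reaches[OF singleton_in_balls B] x exists_least_iff[of "\<lambda>k. (parent_ball ^^ k) {x} = B"]
      by auto
    with \<open>B \<noteq> {x}\<close> obtain j where j: "k = Suc j"
      by (cases k) auto
    define C where "C = (parent_ball ^^ j) {x}"
    have "C \<in> balls" "parent_ball C = B" "C \<noteq> B"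
      using funpow_parent_ball singleton_in_balls x k least j by (auto simp: C_def)
    moreover have "C \<noteq> M"
      using calculation parent_ball_M by auto
    ultimately show False
      using leaf by (auto simp: gen_is_leaf_def)
  qed
next
  assume "\<exists>x\<in>M. B = {x}"
  then obtain x where x: "x \<in> M" "B = {x}"
    by blast
  have "C \<noteq> M \<Longrightarrow> parent_ball C \<noteq> {x}" if "C \<in> balls" for C
    using parent_ball_least(2)[OF that] balls_nonempty[OF that]
    by (auto simp: psubset_eq subset_singleton_iff)
  then show "gen_is_leaf balls M parent_ball B"
    using x singleton_in_balls by (auto simp: gen_is_leaf_def)
qed

lemma ball_tree_is_lca:
  assumes "x \<in> M" "y \<in> M"
  shows "gen_is_lca parent_ball {x} {y} (mcball x (d x y))"
proof -
  let ?W = "mcball x (d x y)"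
  have W: "?W \<in> balls" "x \<in> ?W" "y \<in> ?W"
    using assms by (auto simp: balls_def)
  have "?W \<subseteq> C" if C: "C \<in> balls" "x \<in> C" "y \<in> C" for C
  proof -
    obtain c r where "C = mcball c r"
      using C(1) unfolding balls_def by blast
    then have "C = mcball x r"
      using mcball_recentre C(2) by blast
    then show ?thesis
      using C(3) by auto
  qed
  then show ?thesis
    using assms W singleton_in_balls
    by (auto simp: gen_is_lca_def ancestors_parent_ball)
qed

lemma max_dist_ge: "B \<subseteq> M \<Longrightarrow> x \<in> B \<Longrightarrow> y \<in> B \<Longrightarrow> d x y \<le> max_dist B"
  unfolding max_dist_def using finite_M by (intro Max_ge) (auto intro: finite_subset)

lemma max_dist_attained:
  assumes "B \<subseteq> M" "B \<noteq> {}"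
  obtains x y where "x \<in> B" "y \<in> B" "max_dist B = d x y"
proof -
  have "max_dist B \<in> case_prod d ` (B \<times> B)"
    unfolding max_dist_def using assms finite_M by (intro Max_in) (auto intro: finite_subset)
  then show ?thesis
    using that by auto
qed

lemma max_dist_mono: "A \<subseteq> B \<Longrightarrow> B \<subseteq> M \<Longrightarrow> A \<noteq> {} \<Longrightarrow> max_dist A \<le> max_dist B"
  by (metis max_dist_attained max_dist_ge subset_trans subsetD)

lemma max_dist_singleton: "max_dist {x} = d x x"
  by (simp add: max_dist_def)

lemma max_dist_eq_0_iff:
  assumes "B \<in> balls"
  shows "max_dist B = 0 \<longleftrightarrow> (\<exists>x\<in>M. B = {x})"
proof
  assume max0: "max_dist B = 0"
  obtain x where x: "x \<in> B" "x \<in> M"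
    using assms balls_nonempty balls_subset by blast
  have "y = x" if "y \<in> B" for y
    using max_dist_ge[OF balls_subset[OF assms] x(1) that] max0 nonneg[of x y] zero[of x y]
      balls_subset[OF assms] x that by auto
  then show "\<exists>x\<in>M. B = {x}"
    using x by blast
qed (auto simp: max_dist_singleton)

lemma max_dist_mcball:
  assumes "x \<in> M" "y \<in> M"
  shows "max_dist (mcball x (d x y)) = d x y"
proof (rule order.antisym)
  have "mcball x (d x y) \<noteq> {}"
    using assms by (metis centre_in_mcball_iff empty_iff nonneg)
  then obtain a b where ab: "a \<in> mcball x (d x y)" "b \<in> mcball x (d x y)"
    and max: "max_dist (mcball x (d x y)) = d a b"
    using max_dist_attained[OF mcball_subset_mspace] by blast
  then show "max_dist (mcball x (d x y)) \<le> d x y"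
    using ultra[of a x b] commute[of a x] by auto
  show "d x y \<le> max_dist (mcball x (d x y))"
    using assms by (intro max_dist_ge mcball_subset_mspace) auto
qed

lemma hst_tree_balls: "hst_tree 1 M d balls M parent_ball (\<lambda>x. {x}) max_dist"
  unfolding hst_tree_def
proof (intro conjI ballI impI)
  show "gen_rooted_tree balls M parent_ball"
    by (rule ball_tree)
  show "bij_betw (\<lambda>x. {x}) M {B. gen_is_leaf balls M parent_ball B}"
    unfolding ball_tree_is_leaf_iff by (auto simp: bij_betw_def)
  fix B assume B: "B \<in> balls"
  then show "0 \<le> max_dist B"
    using max_dist_attained[OF balls_subset balls_nonempty] by (metis nonneg)
  show "max_dist B = 0 \<longleftrightarrow> gen_is_leaf balls M parent_ball B"
    using B by (simp add: max_dist_eq_0_iff ball_tree_is_leaf_iff)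
  assume "B \<noteq> M"
  then show "max_dist B \<le> max_dist (parent_ball B) / 1"
    using B parent_ball_least balls_subset balls_nonempty by (simp add: max_dist_mono less_imp_le)
next
  fix x y assume "x \<in> M" "y \<in> M"
  then show "\<exists>w. gen_is_lca parent_ball {x} {y} w \<and> d x y = max_dist w"
    using ball_tree_is_lca max_dist_mcball by metis
qed

lemma hst_metric_one: "hst_metric 1 M d"
  using hst_tree_balls by (rule hst_metric_if_hst_tree)

end

definition attach :: "'a \<Rightarrow> 'a \<Rightarrow> real \<Rightarrow> ('a \<Rightarrow> 'a \<Rightarrow> real) \<Rightarrow> 'a \<Rightarrow> 'a \<Rightarrow> real" where
  "attach x y c D u v =
     (if u = x \<and> v = x then 0
      else if u = x then max c (D y v)
      else if v = x then max c (D y u)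
      else D u v)"

lemma attach_other: "u \<noteq> x \<Longrightarrow> v \<noteq> x \<Longrightarrow> attach x y c D u v = D u v"
  by (simp add: attach_def)

lemma Ultrametric_space_attach:
  assumes "Ultrametric_space S D" "y \<in> S" "x \<notin> S" "c > 0"
  shows "Ultrametric_space (insert x S) (attach x y c D)"
proof -
  interpret Ultrametric_space S D
    by fact
  show ?thesis
  proof (rule Ultrametric_spaceI)
    fix u v
    show "0 \<le> attach x y c D u v"
      using assms(4) by (auto simp: attach_def max_def)
    show "attach x y c D u v = attach x y c D v u"
      by (auto simp: attach_def commute)
    assume "u \<in> insert x S" "v \<in> insert x S"
    then show "attach x y c D u v = 0 \<longleftrightarrow> u = v"
      using assms(3,4) by (auto simp: attach_def max_def)
  next
    fix a b e assume "a \<in> insert x S" "b \<in> insert x S" "e \<in> insert x S"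
    then show "attach x y c D a e \<le> max (attach x y c D a b) (attach x y c D b e)"
      using assms(2,3,4) ultra[of a y e] ultra[of y b e] ultra[of y b a] ultra[of a b e]
        commute[of a y] commute[of b a] nonneg[of y b]
      by (auto simp: attach_def max_def split: if_splits)
  qed
qed

context Metric_space
begin

lemma attach_distortion_new_pair:
  assumes "x \<in> M" "y \<in> M" "v \<in> M" "K \<ge> 2"
    and nearest: "d x y \<le> d x v"
    and old: "d y v \<le> (1 - 2 / K) * D y v" "D y v \<le> K / 2 * d y v"
  shows "d x v \<le> (1 - 1 / K) * max (K * d x y) (D y v)"
    and "max (K * d x y) (D y v) \<le> K * d x v"
proof -
  define m where "m = max (K * d x y) (D y v)"
  have K: "K > 0" "1 - 2 / K \<ge> 0"
    using assms(4) by (auto simp: field_simps)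
  have "d x v \<le> d x y + d y v"
    using triangle assms(1-3) by blast
  also have "\<dots> \<le> m / K + (1 - 2 / K) * m"
  proof (rule add_mono)
    show "d x y \<le> m / K"
      using K by (simp add: m_def pos_le_divide_eq mult.commute)
    show "d y v \<le> (1 - 2 / K) * m"
      using old(1) mult_left_mono[OF _ K(2), of "D y v" m] by (simp add: m_def)
  qed
  also have "\<dots> = (1 - 1 / K) * m"
    by (simp add: algebra_simps)
  finally show "d x v \<le> (1 - 1 / K) * m" .
  have "d y v \<le> 2 * d x v"
    using triangle[of y x v] commute[of y x] nearest assms(1-3) by simp
  then have "K / 2 * d y v \<le> K / 2 * (2 * d x v)"
    using K by (intro mult_left_mono) auto
  then have "D y v \<le> K * d x v"
    using old(2) by simp
  moreover have "K * d x y \<le> K * d x v"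
    using nearest K by simp
  ultimately show "m \<le> K * d x v"
    by (simp add: m_def)
qed

lemma attach_distortion:
  assumes "S \<subseteq> M" "x \<in> M" "y \<in> S" "K \<ge> 2"
    and nearest: "\<And>z. z \<in> S \<Longrightarrow> d x y \<le> d x z"
    and D_nonneg: "\<And>u v. 0 \<le> D u v"
    and old: "\<And>u v. u \<in> S \<Longrightarrow> v \<in> S \<Longrightarrow> d u v \<le> (1 - 2 / K) * D u v \<and> D u v \<le> K / 2 * d u v"
    and uv: "u \<in> insert x S" "v \<in> insert x S"
  shows "d u v \<le> (1 - 1 / K) * attach x y (K * d x y) D u v \<and> attach x y (K * d x y) D u v \<le> K * d u v"
proof -
  have new: "d x w \<le> (1 - 1 / K) * max (K * d x y) (D y w) \<and> max (K * d x y) (D y w) \<le> K * d x w"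
    if "w \<in> S" for w
    using attach_distortion_new_pair[of x y w K D] assms that by blast
  consider "u = x" "v = x" | "u = x" "v \<in> S" "v \<noteq> x" | "v = x" "u \<in> S" "u \<noteq> x"
    | "u \<noteq> x" "v \<noteq> x" "u \<in> S" "v \<in> S"
    using uv by auto
  then show ?thesis
  proof cases
    case 1
    then show ?thesis
      using assms(2) by (simp add: attach_def)
  next
    case 2
    then show ?thesis
      using new by (simp add: attach_def)
  next
    case 3
    then show ?thesis
      using new[of u] commute[of u x] by (simp add: attach_def)
  next
    case 4
    have "(1 - 2 / K) * D u v \<le> (1 - 1 / K) * D u v"
      using D_nonneg[of u v] assms(4) by (intro mult_right_mono) (auto simp: divide_right_mono)
    moreover have "K / 2 * d u v \<le> K * d u v"
      using assms(4) nonneg[of u v] by (intro mult_right_mono) auto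
    ultimately show ?thesis
      using 4 old[of u v] by (simp add: attach_other)
  qed
qed

end

(* The points are listed newest first. *)
fun hst_embed :: "('a \<Rightarrow> 'a \<Rightarrow> real) \<Rightarrow> 'a list \<Rightarrow> 'a \<Rightarrow> 'a \<Rightarrow> real" where
  "hst_embed d [] = (\<lambda>u v. 0)"
| "hst_embed d [x] = (\<lambda>u v. 0)"
| "hst_embed d (x # ys) =
     (let y = arg_min_on (d x) (set ys) in attach x y (2 ^ length (x # ys) * d x y) (hst_embed d ys))"

lemma hst_embed_Cons:
  "ys \<noteq> [] \<Longrightarrow> hst_embed d (x # ys) =
     attach x (arg_min_on (d x) (set ys)) (2 ^ length (x # ys) * d x (arg_min_on (d x) (set ys)))
       (hst_embed d ys)"
  by (cases ys) (simp_all add: Let_def)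

lemma (in Metric_space) hst_embed_invariant:
  assumes "ys \<noteq> []" "set ys \<subseteq> M" "distinct ys"
  shows "Ultrametric_space (set ys) (hst_embed d ys) \<and>
    (\<forall>u\<in>set ys. \<forall>v\<in>set ys. d u v \<le> (1 - 1 / 2 ^ length ys) * hst_embed d ys u v \<and>
       hst_embed d ys u v \<le> 2 ^ length ys * d u v)"
  using assms
proof (induction ys rule: list_nonempty_induct)
  case (single x)
  then show ?case
    by (auto intro: Ultrametric_spaceI)
next
  case (cons x ys)
  define y where "y = arg_min_on (d x) (set ys)"
  define K :: real where "K = 2 ^ length (x # ys)"
  have y: "y \<in> set ys" "\<And>z. z \<in> set ys \<Longrightarrow> d x y \<le> d x z"
    using cons.hyps by (auto simp: y_def arg_min_if_finite arg_min_least)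
  have x: "x \<in> M" "x \<notin> set ys"
    using cons.prems by auto
  have K: "K \<ge> 2" "2 / K = 1 / 2 ^ length ys" "K / 2 = 2 ^ length ys"
    using one_le_power[of "2::real" "length ys"] by (auto simp: K_def)
  have ultra: "Ultrametric_space (set ys) (hst_embed d ys)"
    and old: "\<And>u v. u \<in> set ys \<Longrightarrow> v \<in> set ys \<Longrightarrow>
      d u v \<le> (1 - 2 / K) * hst_embed d ys u v \<and> hst_embed d ys u v \<le> K / 2 * d u v"
    using cons.IH cons.prems unfolding K(2,3) by auto
  have D_nonneg: "0 \<le> hst_embed d ys u v" for u v
    using ultra by (simp add: Ultrametric_space_def Metric_space_def)
  have embed: "hst_embed d (x # ys) = attach x y (K * d x y) (hst_embed d ys)"
    using cons.hyps by (simp add: hst_embed_Cons y_def K_def)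
  have "d x y > 0"
    using x y(1) cons.prems(1) by (intro mdist_pos_less) auto
  then have "Ultrametric_space (set (x # ys)) (hst_embed d (x # ys))"
    using Ultrametric_space_attach[OF ultra y(1) x(2)] K(1) by (simp add: embed)
  moreover have "d u v \<le> (1 - 1 / K) * hst_embed d (x # ys) u v \<and> hst_embed d (x # ys) u v \<le> K * d u v"
    if "u \<in> set (x # ys)" "v \<in> set (x # ys)" for u v
    unfolding embed
    using attach_distortion[OF _ x(1) y(1) K(1) y(2) D_nonneg old] cons.prems that by simp
  ultimately show ?case
    by (simp add: K_def)
qed

lemma hst_embed_Cons_other:
  "ys \<noteq> [] \<Longrightarrow> u \<noteq> x \<Longrightarrow> v \<noteq> x \<Longrightarrow> hst_embed d (x # ys) u v = hst_embed d ys u v"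
  by (simp add: hst_embed_Cons attach_other)

context Metric_space
begin

lemma is_HST_metric_hst_embed:
  assumes "ys \<noteq> []" "set ys \<subseteq> M" "distinct ys"
  shows "is_HST_metric (set ys) (hst_embed d ys)"
proof -
  have "Finite_ultrametric_space (set ys) (hst_embed d ys)"
    using hst_embed_invariant[OF assms] assms(1)
    by (simp add: Finite_ultrametric_space_def Finite_ultrametric_space_axioms_def)
  then show ?thesis
    using Finite_ultrametric_space.hst_metric_one by (auto simp: is_HST_metric_def)
qed

lemma hst_embed_distortion:
  assumes "ys \<noteq> []" "set ys \<subseteq> M" "distinct ys" "u \<in> set ys" "v \<in> set ys"
  shows "d u v \<le> hst_embed d ys u v" "hst_embed d ys u v \<le> 2 ^ length ys * d u v"
proof -
  have "0 \<le> hst_embed d ys u v"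
    using hst_embed_invariant[OF assms(1-3)] by (simp add: Ultrametric_space_def Metric_space_def)
  then have "(1 - 1 / 2 ^ length ys) * hst_embed d ys u v \<le> hst_embed d ys u v"
    by (simp add: mult_left_le_one_le)
  then show "d u v \<le> hst_embed d ys u v" "hst_embed d ys u v \<le> 2 ^ length ys * d u v"
    using hst_embed_invariant[OF assms(1-3)] assms(4,5) by fastforce+
qed

end

theorem mainTheorem15:
  fixes M :: "'a set" and d :: "'a \<Rightarrow> 'a \<Rightarrow> real"
  assumes "Metric_space M d"
  shows "\<exists>A :: 'a list \<Rightarrow> 'a \<Rightarrow> 'a \<Rightarrow> real.
    \<forall>xs. set xs \<subseteq> M \<and> distinct xs \<and> xs \<noteq> [] \<longrightarrow>
      is_HST_metric (set xs) (A xs) \<and>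
      (\<forall>x\<in>M. x \<notin> set xs \<longrightarrow>
         (\<forall>u\<in>set xs. \<forall>v\<in>set xs. A (xs @ [x]) u v = A xs u v)) \<and>
      (\<forall>u\<in>set xs. \<forall>v\<in>set xs. d u v \<le> A xs u v \<and> A xs u v \<le> 2 ^ length xs * d u v)"
proof (intro exI[of _ "\<lambda>xs. hst_embed d (rev xs)"] allI impI conjI ballI)
  fix xs :: "'a list" and x u v
  assume xs: "set xs \<subseteq> M \<and> distinct xs \<and> xs \<noteq> []"
  then show "is_HST_metric (set xs) (hst_embed d (rev xs))"
    using Metric_space.is_HST_metric_hst_embed[OF assms, of "rev xs"] by simp
  assume "u \<in> set xs" "v \<in> set xs"
  then show "d u v \<le> hst_embed d (rev xs) u v" "hst_embed d (rev xs) u v \<le> 2 ^ length xs * d u v"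
    using xs Metric_space.hst_embed_distortion[OF assms, of "rev xs" u v] by auto
  assume "x \<notin> set xs"
  with \<open>u \<in> set xs\<close> \<open>v \<in> set xs\<close> have "u \<noteq> x" "v \<noteq> x"
    by auto
  with xs show "hst_embed d (rev (xs @ [x])) u v = hst_embed d (rev xs) u v"
    by (simp add: hst_embed_Cons_other)
qed

end
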